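(* Let $\Omega\subset\mathbb R^d$ be a bounded open set, $L>0$, $n\in\mathbb Z_+$, $X=\overline\Omega\times[-L,L]^n$, and let $\Gamma:\mathcal P(X)\times X\to X$ satisfy: (i) if $\mu_j\to\mu$ in $\mathcal P(X)$ then $\sup_{(x,y)\in X}|\Gamma(\mu_j,(x,y))-\Gamma(\mu,(x,y))|\to0$; (ii) there is $C_0>0$ such that $\sup_{\mu\in\mathcal P(X)}|\Gamma(\mu,(x_1,y_1))-\Gamma(\mu,(x_2,y_2))|\le C_0(|x_1-x_2|+|y_1-y_2|)$ for all $(x_1,y_1),(x_2,y_2)\in X$. Then $G:\mathcal P(X)\to\mathcal P(X)$, $G(\mu)=\Gamma(\mu,\cdot)_\#\mu$, is continuous.
   Context: $\mathcal P(X)$: Borel probability measures on $X$ with the 1-Wasserstein metric $W_1$; $F_\#$ denotes pushforward. *)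

theory Defs
  imports "HOL-Probability.Probability"
begin

definition Prob_on :: "'a::metric_space set \<Rightarrow> 'a measure set" where
  "Prob_on X = {M. sets M = sets (restrict_space borel X) \<and> prob_space M}"

definition couplings :: "'a::metric_space set \<Rightarrow> 'a measure \<Rightarrow> 'a measure \<Rightarrow> ('a \<times> 'a) measure set" where
  "couplings X \<mu> \<nu> = {\<pi>. sets \<pi> = sets (restrict_space borel X \<Otimes>\<^sub>M restrict_space borel X)
       \<and> prob_space \<pi>
       \<and> distr \<pi> (restrict_space borel X) fst = \<mu>
       \<and> distr \<pi> (restrict_space borel X) snd = \<nu>}"

definition W1 :: "'a::metric_space set \<Rightarrow> 'a measure \<Rightarrow> 'a measure \<Rightarrow> ennreal" where
  "W1 X \<mu> \<nu> = (INF \<pi>\<in>couplings X \<mu> \<nu>. \<integral>\<^sup>+ p. ennreal (dist (fst p) (snd p)) \<partial>\<pi>)"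

end

theory Submission
  imports Defs
begin

(* Push a coupling \<pi> of \<nu> and \<mu> forward by the map (x, y) \<mapsto> (\<Gamma>(\<nu>, x), \<Gamma>(\<mu>, y)): this couples
   G(\<nu>) and G(\<mu>), and by the triangle inequality its cost is at most
   sup |\<Gamma>(\<nu>, \<cdot>) - \<Gamma>(\<mu>, \<cdot>)| + Lip(\<Gamma>(\<mu>, \<cdot>)) \<cdot> cost(\<pi>).
   For \<nu> W1-close to \<mu> the first term is small by (i), turned into an \<epsilon>-\<delta> statement by the
   usual argument along sequences, and the second is small by the uniform Lipschitz bound (ii). *)

lemma bounded_abs_component_le:
  "bounded {y::real^'n. \<forall>i. \<bar>y $ i\<bar> \<le> L}"
proof (rule bounded_subset[OF bounded_cbox])
  show "{y::real^'n. \<forall>i. \<bar>y $ i\<bar> \<le> L} \<subseteq> cbox (- (\<chi> i. L)) (\<chi> i. L)"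
    by (auto simp: mem_box_cart abs_le_iff minus_le_iff)
qed

lemma dist_le_SUP_of_bounded:
  fixes f g :: "'i \<Rightarrow> 'a::metric_space"
  assumes "bounded A" and "\<And>i. i \<in> I \<Longrightarrow> f i \<in> A" and "\<And>i. i \<in> I \<Longrightarrow> g i \<in> A" and "i \<in> I"
  shows "dist (f i) (g i) \<le> (SUP i\<in>I. dist (f i) (g i))"
proof (rule cSUP_upper[OF \<open>i \<in> I\<close>])
  obtain e where "\<forall>x\<in>A. \<forall>y\<in>A. dist x y \<le> e"
    using \<open>bounded A\<close> bounded_two_points by blast
  then show "bdd_above ((\<lambda>i. dist (f i) (g i)) ` I)"
    using assms(2,3) by (intro bdd_aboveI2[where M = e]) auto
qed

lemma lipschitz_on_of_dist_components:
  fixes f :: "'a::metric_space \<times> 'b::metric_space \<Rightarrow> 'c::metric_space"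
  assumes "C \<ge> 0"
    and "\<And>x1 y1 x2 y2. (x1, y1) \<in> X \<Longrightarrow> (x2, y2) \<in> X \<Longrightarrow>
           dist (f (x1, y1)) (f (x2, y2)) \<le> C * (dist x1 x2 + dist y1 y2)"
  shows "(2 * C)-lipschitz_on X f"
proof (rule lipschitz_onI)
  fix p q assume "p \<in> X" "q \<in> X"
  have "dist (fst p) (fst q) + dist (snd p) (snd q) \<le> 2 * dist p q"
    using dist_fst_le[of p q] dist_snd_le[of p q] by linarith
  then have "C * (dist (fst p) (fst q) + dist (snd p) (snd q)) \<le> C * (2 * dist p q)"
    using \<open>C \<ge> 0\<close> by (rule mult_left_mono)
  with assms(2)[of "fst p" "snd p" "fst q" "snd q"] \<open>p \<in> X\<close> \<open>q \<in> X\<close>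
  show "dist (f p) (f q) \<le> 2 * C * dist p q" by simp
qed (use assms(1) in simp)

lemma lipschitz_on_of_SUP_dist_components:
  fixes \<Gamma> :: "'i \<Rightarrow> 'a::metric_space \<times> 'b::metric_space \<Rightarrow> 'c::metric_space"
  assumes "bounded B" and into: "\<And>i p. i \<in> I \<Longrightarrow> p \<in> X \<Longrightarrow> \<Gamma> i p \<in> B" and "C \<ge> 0"
    and bound: "\<And>x1 y1 x2 y2. (x1, y1) \<in> X \<Longrightarrow> (x2, y2) \<in> X \<Longrightarrow>
           (SUP i\<in>I. dist (\<Gamma> i (x1, y1)) (\<Gamma> i (x2, y2))) \<le> C * (dist x1 x2 + dist y1 y2)"
    and "i \<in> I"
  shows "(2 * C)-lipschitz_on X (\<Gamma> i)"
proof (rule lipschitz_on_of_dist_components[OF \<open>C \<ge> 0\<close>])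
  fix x1 y1 x2 y2 assume p: "(x1, y1) \<in> X" and q: "(x2, y2) \<in> X"
  have "dist (\<Gamma> i (x1, y1)) (\<Gamma> i (x2, y2)) \<le> (SUP i\<in>I. dist (\<Gamma> i (x1, y1)) (\<Gamma> i (x2, y2)))"
    using \<open>bounded B\<close> into p q \<open>i \<in> I\<close> by (intro dist_le_SUP_of_bounded) auto
  with bound[OF p q] show "dist (\<Gamma> i (x1, y1)) (\<Gamma> i (x2, y2)) \<le> C * (dist x1 x2 + dist y1 y2)"
    by linarith
qed

lemma measurable_restrict_space_continuous_on:
  assumes "continuous_on A f" and "f ` A \<subseteq> B"
  shows "f \<in> restrict_space borel A \<rightarrow>\<^sub>M restrict_space borel B"
proof (rule measurable_restrict_space2)
  show "f \<in> space (restrict_space borel A) \<rightarrow> B"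
    using assms(2) by (auto simp: space_restrict_space)
  show "f \<in> borel_measurable (restrict_space borel A)"
    using assms(1) by (rule borel_measurable_continuous_on_restrict)
qed

lemma couplings_distr_map_prod:
  assumes \<pi>: "\<pi> \<in> couplings X \<mu> \<nu>"
    and f: "f \<in> restrict_space borel X \<rightarrow>\<^sub>M restrict_space borel X"
    and g: "g \<in> restrict_space borel X \<rightarrow>\<^sub>M restrict_space borel X"
  shows "distr \<pi> (restrict_space borel X \<Otimes>\<^sub>M restrict_space borel X) (map_prod f g)
           \<in> couplings X (distr \<mu> (restrict_space borel X) f) (distr \<nu> (restrict_space borel X) g)"
proof -
  let ?RX = "restrict_space borel X"
  have sets_\<pi>: "sets \<pi> = sets (?RX \<Otimes>\<^sub>M ?RX)" and "prob_space \<pi>"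
    and \<mu>: "distr \<pi> ?RX fst = \<mu>" and \<nu>: "distr \<pi> ?RX snd = \<nu>"
    using \<pi> by (auto simp: couplings_def)
  have fg: "map_prod f g \<in> \<pi> \<rightarrow>\<^sub>M ?RX \<Otimes>\<^sub>M ?RX"
    unfolding measurable_cong_sets[OF sets_\<pi> refl] map_prod_def split_beta'
    by (intro measurable_Pair measurable_compose[OF measurable_fst f] measurable_compose[OF measurable_snd g])
  have fst: "fst \<in> \<pi> \<rightarrow>\<^sub>M ?RX" and snd: "snd \<in> \<pi> \<rightarrow>\<^sub>M ?RX"
    unfolding measurable_cong_sets[OF sets_\<pi> refl] by simp_all
  have "distr (distr \<pi> (?RX \<Otimes>\<^sub>M ?RX) (map_prod f g)) ?RX fst = distr (distr \<pi> ?RX fst) ?RX f"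
    using fg fst f by (simp add: distr_distr comp_def)
  moreover
  have "distr (distr \<pi> (?RX \<Otimes>\<^sub>M ?RX) (map_prod f g)) ?RX snd = distr (distr \<pi> ?RX snd) ?RX g"
    using fg snd g by (simp add: distr_distr comp_def)
  ultimately show ?thesis
    using \<mu> \<nu> prob_space.prob_space_distr[OF \<open>prob_space \<pi>\<close> fg] by (simp add: couplings_def)
qed

lemma W1_distr_le_coupling_cost:
  fixes X :: "'a::{metric_space, second_countable_topology} set"
  assumes \<pi>: "\<pi> \<in> couplings X \<mu> \<nu>"
    and f: "f \<in> restrict_space borel X \<rightarrow>\<^sub>M restrict_space borel X"
    and g: "g \<in> restrict_space borel X \<rightarrow>\<^sub>M restrict_space borel X"
    and lip: "K-lipschitz_on X g"
    and close: "\<And>x. x \<in> X \<Longrightarrow> dist (f x) (g x) \<le> s"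
  shows "W1 X (distr \<mu> (restrict_space borel X) f) (distr \<nu> (restrict_space borel X) g)
           \<le> ennreal s + ennreal K * (\<integral>\<^sup>+ p. ennreal (dist (fst p) (snd p)) \<partial>\<pi>)"
proof -
  let ?RX = "restrict_space borel X"
  let ?d = "\<lambda>p. ennreal (dist (fst p) (snd p))"
  have sets_\<pi>: "sets \<pi> = sets (?RX \<Otimes>\<^sub>M ?RX)" and "prob_space \<pi>"
    using \<pi> by (auto simp: couplings_def)
  have space_\<pi>: "space \<pi> = X \<times> X"
    using sets_eq_imp_space_eq[OF sets_\<pi>] by (simp add: space_pair_measure space_restrict_space)
  have "(\<lambda>x. x) \<in> ?RX \<rightarrow>\<^sub>M borel"
    by (simp add: measurable_restrict_space1)
  then have "fst \<in> borel_measurable (?RX \<Otimes>\<^sub>M ?RX)" "snd \<in> borel_measurable (?RX \<Otimes>\<^sub>M ?RX)"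
    using measurable_compose[OF measurable_fst] measurable_compose[OF measurable_snd] by fastforce+
  then have "(\<lambda>p. dist (fst p) (snd p)) \<in> borel_measurable (?RX \<Otimes>\<^sub>M ?RX)"
    by (rule borel_measurable_dist)
  then have d: "?d \<in> borel_measurable (?RX \<Otimes>\<^sub>M ?RX)"
    by measurable
  have fg: "map_prod f g \<in> \<pi> \<rightarrow>\<^sub>M ?RX \<Otimes>\<^sub>M ?RX"
    unfolding measurable_cong_sets[OF sets_\<pi> refl] map_prod_def split_beta'
    by (intro measurable_Pair measurable_compose[OF measurable_fst f] measurable_compose[OF measurable_snd g])
  have "W1 X (distr \<mu> ?RX f) (distr \<nu> ?RX g) \<le> (\<integral>\<^sup>+ p. ?d p \<partial>distr \<pi> (?RX \<Otimes>\<^sub>M ?RX) (map_prod f g))"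
    unfolding W1_def by (rule INF_lower) (rule couplings_distr_map_prod[OF \<pi> f g])
  also have "\<dots> = (\<integral>\<^sup>+ p. ennreal (dist (f (fst p)) (g (snd p))) \<partial>\<pi>)"
    using fg d by (simp add: nn_integral_distr map_prod_def split_beta)
  also have "\<dots> \<le> (\<integral>\<^sup>+ p. ennreal s + ennreal K * ?d p \<partial>\<pi>)"
  proof (rule nn_integral_mono)
    fix p assume "p \<in> space \<pi>"
    then have x: "fst p \<in> X" and y: "snd p \<in> X"
      by (auto simp: space_\<pi> mem_Times_iff)
    have "dist (f (fst p)) (g (snd p)) \<le> dist (f (fst p)) (g (fst p)) + dist (g (fst p)) (g (snd p))"
      by (rule dist_triangle)
    then have "ennreal (dist (f (fst p)) (g (snd p)))
               \<le> ennreal (dist (f (fst p)) (g (fst p))) + ennreal (dist (g (fst p)) (g (snd p)))"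
      by (simp add: ennreal_plus[symmetric] del: ennreal_plus)
    also have "\<dots> \<le> ennreal s + ennreal K * ?d p"
      using close[OF x] lipschitz_onD[OF lip x y] lipschitz_on_nonneg[OF lip]
      by (intro add_mono) (auto simp: ennreal_mult[symmetric] intro: ennreal_leI)
    finally show "ennreal (dist (f (fst p)) (g (snd p))) \<le> ennreal s + ennreal K * ?d p" .
  qed
  also have "\<dots> = ennreal s + ennreal K * (\<integral>\<^sup>+ p. ?d p \<partial>\<pi>)"
    using d prob_space.emeasure_space_1[OF \<open>prob_space \<pi>\<close>]
    by (simp add: nn_integral_add nn_integral_cmult measurable_cong_sets[OF sets_\<pi> refl])
  finally show ?thesis .
qed

lemma W1_distr_le_of_W1_less:
  fixes X :: "'a::{metric_space, second_countable_topology} set"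
  assumes "W1 X \<mu> \<nu> < ennreal \<delta>"
    and f: "f \<in> restrict_space borel X \<rightarrow>\<^sub>M restrict_space borel X"
    and g: "g \<in> restrict_space borel X \<rightarrow>\<^sub>M restrict_space borel X"
    and lip: "K-lipschitz_on X g"
    and close: "\<And>x. x \<in> X \<Longrightarrow> dist (f x) (g x) \<le> s"
  shows "W1 X (distr \<mu> (restrict_space borel X) f) (distr \<nu> (restrict_space borel X) g)
           \<le> ennreal s + ennreal (K * \<delta>)"
proof -
  obtain \<pi> where \<pi>: "\<pi> \<in> couplings X \<mu> \<nu>"
    and cost: "(\<integral>\<^sup>+ p. ennreal (dist (fst p) (snd p)) \<partial>\<pi>) < ennreal \<delta>"
    using assms(1) unfolding W1_def INF_less_iff by blast
  have "W1 X (distr \<mu> (restrict_space borel X) f) (distr \<nu> (restrict_space borel X) g)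
          \<le> ennreal s + ennreal K * (\<integral>\<^sup>+ p. ennreal (dist (fst p) (snd p)) \<partial>\<pi>)"
    by (rule W1_distr_le_coupling_cost[OF \<pi> f g lip close])
  also have "\<dots> \<le> ennreal s + ennreal K * ennreal \<delta>"
    using cost by (intro add_left_mono mult_left_mono) simp_all
  also have "\<dots> = ennreal s + ennreal (K * \<delta>)"
    using lipschitz_on_nonneg[OF lip] by (simp add: ennreal_mult')
  finally show ?thesis .
qed

lemma ex_delta_of_sequential_tendsto_zero:
  fixes d :: "'a \<Rightarrow> ennreal" and F :: "'a \<Rightarrow> real"
  assumes seq: "\<And>xs. (\<forall>j. xs j \<in> A) \<Longrightarrow> (\<lambda>j. d (xs j)) \<longlonglongrightarrow> 0 \<Longrightarrow> (\<lambda>j. F (xs j)) \<longlonglongrightarrow> 0"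
    and "\<epsilon> > 0"
  shows "\<exists>\<delta>>0. \<forall>x\<in>A. d x < ennreal \<delta> \<longrightarrow> F x < \<epsilon>"
proof (rule ccontr)
  assume "\<not> ?thesis"
  then have "\<forall>\<delta>>0. \<exists>x. x \<in> A \<and> d x < ennreal \<delta> \<and> \<not> F x < \<epsilon>"
    by auto
  then have "\<forall>j::nat. \<exists>x. x \<in> A \<and> d x < ennreal (inverse (real (Suc j))) \<and> \<not> F x < \<epsilon>"
    by simp
  then have "\<exists>xs. \<forall>j::nat. xs j \<in> A \<and> d (xs j) < ennreal (inverse (real (Suc j))) \<and> \<not> F (xs j) < \<epsilon>"
    by (rule choice)
  then obtain xs where xs: "\<And>j. xs j \<in> A" "\<And>j. d (xs j) < ennreal (inverse (real (Suc j)))"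
    and far: "\<And>j. \<not> F (xs j) < \<epsilon>"
    by blast
  have "(\<lambda>j. d (xs j)) \<longlonglongrightarrow> 0"
  proof (rule tendsto_sandwich)
    show "\<forall>\<^sub>F j in sequentially. 0 \<le> d (xs j)"
      by simp
    show "\<forall>\<^sub>F j in sequentially. d (xs j) \<le> ennreal (inverse (real (Suc j)))"
      using xs(2) by (simp add: less_imp_le)
    show "(\<lambda>j. ennreal (inverse (real (Suc j)))) \<longlonglongrightarrow> 0"
      using tendsto_ennrealI[OF LIMSEQ_inverse_real_of_nat] by simp
  qed simp
  then have "(\<lambda>j. F (xs j)) \<longlonglongrightarrow> 0"
    using seq xs(1) by blast
  then have "eventually (\<lambda>j. F (xs j) < \<epsilon>) sequentially"
    using \<open>\<epsilon> > 0\<close> by (intro order_tendstoD) auto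
  with far show False
    by (simp add: eventually_sequentially)
qed

lemma ennreal_add_less_of_less_le:
  assumes "a < c" and "0 < c" and "b \<le> d" and "0 \<le> d"
  shows "ennreal a + ennreal b < ennreal (c + d)"
proof -
  have "ennreal a + ennreal b \<le> ennreal a + ennreal d"
    using \<open>b \<le> d\<close> by (intro add_left_mono ennreal_leI)
  also have "\<dots> < ennreal c + ennreal d"
    using assms by (simp add: ennreal_lessI)
  also have "\<dots> = ennreal (c + d)"
    using assms by (simp add: ennreal_plus[symmetric] del: ennreal_plus)
  finally show ?thesis .
qed

theorem corollaryD4:
  fixes \<Omega> :: "(real^'d) set" and L :: real and X :: "((real^'d) \<times> (real^'n)) set"
    and \<Gamma> :: "((real^'d) \<times> (real^'n)) measure \<Rightarrow> ((real^'d) \<times> (real^'n)) \<Rightarrow> ((real^'d) \<times> (real^'n))"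
  assumes "open \<Omega>" and "bounded \<Omega>" and "L > 0"
    and X_def: "X = closure \<Omega> \<times> {y. \<forall>i. \<bar>y $ i\<bar> \<le> L}"
    and \<Gamma>_into: "\<And>\<mu> p. \<mu> \<in> Prob_on X \<Longrightarrow> p \<in> X \<Longrightarrow> \<Gamma> \<mu> p \<in> X"
    and \<Gamma>_cont: "\<And>\<mu>s \<mu>. (\<forall>j. \<mu>s j \<in> Prob_on X) \<Longrightarrow> \<mu> \<in> Prob_on X \<Longrightarrow>
         ((\<lambda>j. W1 X (\<mu>s j) \<mu>) \<longlonglongrightarrow> 0) \<Longrightarrow>
         ((\<lambda>j. SUP p\<in>X. dist (\<Gamma> (\<mu>s j) p) (\<Gamma> \<mu> p)) \<longlonglongrightarrow> 0)"
    and \<Gamma>_lip: "\<exists>C0>0. \<forall>x1 y1 x2 y2. (x1, y1) \<in> X \<longrightarrow> (x2, y2) \<in> X \<longrightarrow>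
         (SUP \<mu>\<in>Prob_on X. dist (\<Gamma> \<mu> (x1, y1)) (\<Gamma> \<mu> (x2, y2)))
           \<le> C0 * (dist x1 x2 + dist y1 y2)"
  shows "\<forall>\<mu>\<in>Prob_on X. \<forall>\<epsilon>>0. \<exists>\<delta>>0. \<forall>\<nu>\<in>Prob_on X.
           W1 X \<nu> \<mu> < ennreal \<delta> \<longrightarrow>
           W1 X (distr \<nu> (restrict_space borel X) (\<Gamma> \<nu>))
                (distr \<mu> (restrict_space borel X) (\<Gamma> \<mu>)) < ennreal \<epsilon>"
proof (intro ballI allI impI)
  fix \<mu> and \<epsilon> :: real
  assume \<mu>: "\<mu> \<in> Prob_on X" and "\<epsilon> > 0"
  let ?RX = "restrict_space borel X"
  have "bounded X"
    unfolding X_def using \<open>bounded \<Omega>\<close> bounded_abs_component_le by (intro bounded_Times bounded_closure)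
  obtain C0 where "C0 > 0" and C0: "\<And>x1 y1 x2 y2. (x1, y1) \<in> X \<Longrightarrow> (x2, y2) \<in> X \<Longrightarrow>
      (SUP \<nu>\<in>Prob_on X. dist (\<Gamma> \<nu> (x1, y1)) (\<Gamma> \<nu> (x2, y2))) \<le> C0 * (dist x1 x2 + dist y1 y2)"
    using \<Gamma>_lip by blast
  define K where "K = 2 * C0"
  have lip: "K-lipschitz_on X (\<Gamma> \<nu>)" if "\<nu> \<in> Prob_on X" for \<nu>
    unfolding K_def using \<open>bounded X\<close> \<Gamma>_into \<open>C0 > 0\<close> C0 that
    by (intro lipschitz_on_of_SUP_dist_components) auto
  have meas: "\<Gamma> \<nu> \<in> ?RX \<rightarrow>\<^sub>M ?RX" if "\<nu> \<in> Prob_on X" for \<nu>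
    using lipschitz_on_continuous_on[OF lip[OF that]] \<Gamma>_into[OF that]
    by (intro measurable_restrict_space_continuous_on) auto
  define S where "S \<nu> = (SUP p\<in>X. dist (\<Gamma> \<nu> p) (\<Gamma> \<mu> p))" for \<nu>
  obtain \<delta>1 where "\<delta>1 > 0" and \<delta>1: "\<And>\<nu>. \<nu> \<in> Prob_on X \<Longrightarrow> W1 X \<nu> \<mu> < ennreal \<delta>1 \<Longrightarrow> S \<nu> < \<epsilon> / 2"
    using ex_delta_of_sequential_tendsto_zero[of "Prob_on X" "\<lambda>\<nu>. W1 X \<nu> \<mu>" S "\<epsilon> / 2"]
      \<Gamma>_cont[OF _ \<mu>] \<open>\<epsilon> > 0\<close> unfolding S_def by auto
  define \<delta> where "\<delta> = min \<delta>1 (\<epsilon> / (2 * K))"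
  show "\<exists>\<delta>>0. \<forall>\<nu>\<in>Prob_on X. W1 X \<nu> \<mu> < ennreal \<delta> \<longrightarrow>
          W1 X (distr \<nu> ?RX (\<Gamma> \<nu>)) (distr \<mu> ?RX (\<Gamma> \<mu>)) < ennreal \<epsilon>"
  proof (intro exI[of _ \<delta>] conjI ballI impI)
    show "\<delta> > 0"
      using \<open>\<delta>1 > 0\<close> \<open>\<epsilon> > 0\<close> \<open>C0 > 0\<close> by (simp add: \<delta>_def K_def)
    fix \<nu> assume \<nu>: "\<nu> \<in> Prob_on X" and W: "W1 X \<nu> \<mu> < ennreal \<delta>"
    have "S \<nu> < \<epsilon> / 2"
      using W by (intro \<delta>1[OF \<nu>] less_le_trans[OF W]) (simp add: \<delta>_def ennreal_leI)
    have "K * \<delta> \<le> \<epsilon> / 2"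
      using \<open>C0 > 0\<close> by (simp add: \<delta>_def K_def min_def field_simps)
    have "W1 X (distr \<nu> ?RX (\<Gamma> \<nu>)) (distr \<mu> ?RX (\<Gamma> \<mu>)) \<le> ennreal (S \<nu>) + ennreal (K * \<delta>)"
      using \<open>bounded X\<close> \<Gamma>_into \<nu> \<mu> unfolding S_def
      by (intro W1_distr_le_of_W1_less[OF W meas[OF \<nu>] meas[OF \<mu>] lip[OF \<mu>]] dist_le_SUP_of_bounded) auto
    also have "\<dots> < ennreal (\<epsilon> / 2 + \<epsilon> / 2)"
      using \<open>S \<nu> < \<epsilon> / 2\<close> \<open>K * \<delta> \<le> \<epsilon> / 2\<close> \<open>\<epsilon> > 0\<close> by (intro ennreal_add_less_of_less_le) auto
    finally show "W1 X (distr \<nu> ?RX (\<Gamma> \<nu>)) (distr \<mu> ?RX (\<Gamma> \<mu>)) < ennreal \<epsilon>"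
      by simp
  qed
qed

end
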